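(* Let $g$ be a principal solution of a system $T$. Then the rank of $g$ equals the cardinality of ${\rm alp}(g)$. Moreover, if $h=\vartheta\circ g$ for a morphism $\vartheta$, then the rank of $h$ is at most the rank of $g$.
   Context: A solution of a system $T$ of word equations is a morphism $h$ from ${\rm alp}(T)^*$ (the unknowns of $T$) to a free monoid with $h(u)=h(v)$ for all $(u,v)\in T$; ${\rm alp}(h)$ is the set of letters occurring in images $h(x)$. For $h:\{x_1,\dots,x_n\}^*\to\{a_1,\dots,a_k\}^*$, $\gamma(h)_i=(|h(x_1)|_{a_i},\dots,|h(x_n)|_{a_i})\in\mathbb Q^n$, and the rank of $h$ is the dimension of the $\mathbb Q$-span of $\gamma(h)_1,\dots,\gamma(h)_k$. A solution $h'$ divides a solution $h$ if $h=\vartheta\circ h'$ with $\vartheta$ non-erasing and defined on ${\rm alp}(h')$; a solution $g$ is principal if whenever $g=\vartheta\circ h'$ for a solution $h'$ and non-erasing $\vartheta$, $\vartheta$ is a renaming of letters. *)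

theory Defs
  imports Complex_Main "HOL-Library.Function_Algebras"
begin

text \<open>Morphisms from the unknowns to a free monoid are functions 'x => 'a list,
  extended to words by concatenation; only their values on alp(T) matter.\<close>

type_synonym ('x) word_system = "('x list \<times> 'x list) set"

definition alpT :: "'x word_system \<Rightarrow> 'x set" where
  "alpT T = (\<Union>(u, v)\<in>T. set u \<union> set v)"

definition morph :: "('x \<Rightarrow> 'a list) \<Rightarrow> 'x list \<Rightarrow> 'a list" where
  "morph h w = concat (map h w)"

definition is_solution :: "'x word_system \<Rightarrow> ('x \<Rightarrow> 'a list) \<Rightarrow> bool" where
  "is_solution T h \<longleftrightarrow> (\<forall>(u, v)\<in>T. morph h u = morph h v)"

definition alph :: "'x word_system \<Rightarrow> ('x \<Rightarrow> 'a list) \<Rightarrow> 'a set" where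
  "alph T h = (\<Union>x\<in>alpT T. set (h x))"

text \<open>gamma(h)_a : the Parikh column of letter a, as a rational vector indexed by the
  unknowns of T (coordinates outside alp(T) are 0).\<close>
definition gamma :: "'x word_system \<Rightarrow> ('x \<Rightarrow> 'a list) \<Rightarrow> 'a \<Rightarrow> ('x \<Rightarrow> rat)" where
  "gamma T h a = (\<lambda>x. if x \<in> alpT T then of_nat (count_list (h x) a) else 0)"

definition qscale :: "rat \<Rightarrow> ('x \<Rightarrow> rat) \<Rightarrow> ('x \<Rightarrow> rat)" where
  "qscale c f = (\<lambda>x. c * f x)"

definition rank :: "'x word_system \<Rightarrow> ('x \<Rightarrow> 'a list) \<Rightarrow> nat" where
  "rank T h = vector_space.dim qscale (range (gamma T h))"

definition nonerasing_on :: "'a set \<Rightarrow> ('a \<Rightarrow> 'b list) \<Rightarrow> bool" where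
  "nonerasing_on A \<theta> \<longleftrightarrow> (\<forall>c\<in>A. \<theta> c \<noteq> [])"

definition renaming_on :: "'a set \<Rightarrow> ('a \<Rightarrow> 'b list) \<Rightarrow> bool" where
  "renaming_on A \<theta> \<longleftrightarrow> (\<exists>f. inj_on f A \<and> (\<forall>c\<in>A. \<theta> c = [f c]))"

text \<open>Principal solution. The dividing solutions h' range over morphisms into nat*
  (a countably infinite alphabet; every solution has a finite alphabet, hence is a
  renaming of one into nat*).\<close>
definition principal :: "'x word_system \<Rightarrow> ('x \<Rightarrow> 'a list) \<Rightarrow> bool" where
  "principal T g \<longleftrightarrow> is_solution T g \<and>
     (\<forall>(h' :: 'x \<Rightarrow> nat list) (\<theta> :: nat \<Rightarrow> 'a list).
        is_solution T h' \<and> nonerasing_on (alph T h') \<theta> \<and>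
        (\<forall>x\<in>alpT T. g x = morph \<theta> (h' x))
        \<longrightarrow> renaming_on (alph T h') \<theta>)"

end

theory Submission
  imports Defs
begin

(*
  Proof idea.  Write A = alp(g) and G a = gamma(g)_a.

  Upper bounds (no principality needed): the Parikh vector of a letter b in theta o g
  is the combination  sum_a |theta(a)|_b * G a,  so the gamma-vectors of any h = theta o g
  lie in the span of G ` A; hence rank h <= card A.  Taking theta = identity gives the
  same for g itself.

  Lower bound: let the rational weights c satisfy sum_a c_a G_a = 0, i.e. the additive
  weight  w |-> sum_list (map c w)  vanishes on every image g(x).  The nonempty images
  generate a submonoid whose words all have weight 0; repeatedly replacing u.w by w when
  both u and u.w are generators yields a finite CODE Z of weight-0 words generating all
  images.  Numbering Z by natural numbers, g factors as theta o h' through a solution h'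
  of T with theta non-erasing.  Principality forces theta to be a renaming, so every
  letter a of g is itself a generator [a] in Z, whence c_a = 0.  Thus the vectors G ` A
  are independent and distinct, so they form a basis and rank g = card A.
*)

section \<open>The vector space of rational vectors indexed by the unknowns\<close>

interpretation Q: vector_space "qscale :: rat \<Rightarrow> ('x \<Rightarrow> rat) \<Rightarrow> ('x \<Rightarrow> rat)"
  by unfold_locales (auto simp: qscale_def fun_eq_iff algebra_simps)

lemma sum_fun_apply: "(\<Sum>i\<in>S. f i) x = (\<Sum>i\<in>S. f i x)"
  by (induction S rule: infinite_finite_induct) auto

lemma independent_family_if_only_trivial_relation:
  fixes G :: "'a \<Rightarrow> ('x \<Rightarrow> rat)"
  assumes finA: "finite A"
    and trivial: "\<And>c. (\<Sum>a\<in>A. qscale (c a) (G a)) = 0 \<Longrightarrow> \<forall>a\<in>A. c a = 0"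
  shows "inj_on G A \<and> Q.independent (G ` A)"
proof
  show inj: "inj_on G A"
  proof (rule inj_onI, rule ccontr)
    fix a b assume ab: "a \<in> A" "b \<in> A" "G a = G b" "a \<noteq> b"
    define c where "c d = (if d = a then 1 else if d = b then -1 else (0::rat))" for d
    have "(\<Sum>d\<in>A. qscale (c d) (G d)) = (\<Sum>d\<in>{a, b}. qscale (c d) (G d))"
      by (rule sum.mono_neutral_right) (use finA ab in \<open>auto simp: c_def qscale_def\<close>)
    also have "\<dots> = 0" using ab by (simp add: c_def qscale_def fun_eq_iff)
    finally have "c a = 0" using trivial ab(1) by blast
    then show False by (simp add: c_def)
  qed
  show "Q.independent (G ` A)"
    unfolding Q.dependent_finite[OF finite_imageI[OF finA]]
  proof
    assume "\<exists>u. (\<exists>v\<in>G ` A. u v \<noteq> 0) \<and> (\<Sum>v\<in>G ` A. qscale (u v) v) = 0"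
    then obtain u v where v: "v \<in> G ` A" "u v \<noteq> 0" and rel: "(\<Sum>v\<in>G ` A. qscale (u v) v) = 0"
      by blast
    have "(\<Sum>a\<in>A. qscale (u (G a)) (G a)) = 0"
      using rel by (simp add: sum.reindex[OF inj])
    then show False using trivial[of "u \<circ> G"] v by auto
  qed
qed

section \<open>Parikh vectors of composed morphisms\<close>

text \<open>Letter counts of a morphic image: each occurrence of a in w contributes the
  occurrences of b in theta(a).\<close>

lemma count_list_morph:
  assumes "finite A" "set w \<subseteq> A"
  shows "count_list (morph \<theta> w) b = (\<Sum>a\<in>A. count_list w a * count_list (\<theta> a) b)"
  using sum_list_map_eq_sum_count2[OF assms(2,1), of "\<lambda>a. count_list (\<theta> a) b"]
  by (simp add: morph_def count_list_concat o_def)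

lemma finite_alph: "finite (alpT T) \<Longrightarrow> finite (alph T g)"
  by (auto simp: alph_def)

lemma gamma_morph_comp:
  assumes finT: "finite (alpT T)" and h: "\<forall>x\<in>alpT T. h x = morph \<theta> (g x)"
  shows "gamma T h b = (\<Sum>a\<in>alph T g. qscale (of_nat (count_list (\<theta> a) b)) (gamma T g a))"
proof
  fix x
  show "gamma T h b x = (\<Sum>a\<in>alph T g. qscale (of_nat (count_list (\<theta> a) b)) (gamma T g a)) x"
  proof (cases "x \<in> alpT T")
    case True
    have "set (g x) \<subseteq> alph T g" using True by (auto simp: alph_def)
    then have "count_list (h x) b = (\<Sum>a\<in>alph T g. count_list (g x) a * count_list (\<theta> a) b)"
      using h True count_list_morph[OF finite_alph[OF finT]] by simp
    then show ?thesis using True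
      by (simp add: gamma_def sum_fun_apply qscale_def mult.commute)
  qed (simp add: gamma_def sum_fun_apply qscale_def)
qed

lemma gamma_morph_comp_in_span:
  assumes "finite (alpT T)" and "\<forall>x\<in>alpT T. h x = morph \<theta> (g x)"
  shows "range (gamma T h) \<subseteq> Q.span (gamma T g ` alph T g)"
  unfolding gamma_morph_comp[OF assms]
  by (intro image_subsetI Q.span_sum Q.span_scale Q.span_base imageI)

lemma rank_morph_comp_le:
  assumes finT: "finite (alpT T)" and "\<forall>x\<in>alpT T. h x = morph \<theta> (g x)"
  shows "rank T h \<le> card (alph T g)"
proof -
  have "rank T h \<le> card (gamma T g ` alph T g)"
    unfolding rank_def
    by (rule Q.dim_le_card[OF gamma_morph_comp_in_span[OF assms] finite_imageI[OF finite_alph[OF finT]]])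
  also have "\<dots> \<le> card (alph T g)" by (rule card_image_le[OF finite_alph[OF finT]])
  finally show ?thesis .
qed

text \<open>The letter-to-singleton morphism is the identity; it exhibits g as a composition
  with itself, so the span statement above also applies to g.\<close>

lemma morph_singletons [simp]: "morph (\<lambda>a. [a]) w = w"
  by (induction w) (simp_all add: morph_def)

section \<open>Codes\<close>

definition code :: "'a list set \<Rightarrow> bool" where
  "code Z \<longleftrightarrow> inj_on concat (lists Z)"

lemma distinct_factorizations_prefix:
  assumes "xs \<noteq> ys" "concat xs = concat ys" "[] \<notin> set xs" "[] \<notin> set ys"
  shows "\<exists>u w. u \<in> set xs \<union> set ys \<and> u @ w \<in> set xs \<union> set ys \<and> w \<noteq> []"
  using assms
proof (induction xs arbitrary: ys)
  case Nil
  then show ?case by (cases ys) auto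
next
  case (Cons x xs)
  then obtain y ys' where ys: "ys = y # ys'" by (cases ys) auto
  show ?case
  proof (cases "x = y")
    case True
    with Cons.prems ys have "xs \<noteq> ys'" "concat xs = concat ys'" by auto
    with Cons.IH[of ys'] Cons.prems ys show ?thesis by auto
  next
    case False
    from Cons.prems ys have "x @ concat xs = y @ concat ys'" by simp
    then obtain us where "x = y @ us \<or> x @ us = y"
      by (auto simp: append_eq_append_conv2)
    with False ys show ?thesis by auto
  qed
qed

lemma total_length_decreases:
  assumes "finite Z" "u \<in> Z" "u @ w \<in> Z" "u \<noteq> []"
  shows "sum length (insert w (Z - {u @ w})) < sum length Z"
proof -
  have "sum length (insert w (Z - {u @ w})) \<le> length w + sum length (Z - {u @ w})"
    using assms(1) by (simp add: sum.insert_if)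
  also have "\<dots> = length w + (sum length Z - length (u @ w))"
    using assms by (simp add: sum_diff1_nat)
  finally have "sum length (insert w (Z - {u @ w})) \<le> length w + (sum length Z - length (u @ w))" .
  moreover have "length (u @ w) \<le> sum length Z"
    using assms(1,3) by (intro member_le_sum) auto
  moreover have "length u > 0" using assms(4) by simp
  ultimately show ?thesis unfolding length_append by linarith
qed

text \<open>Induction on the total length: while the set is not a code,
  a generator u @ w with u also a generator is replaced by the shorter w.\<close>

lemma code_refinement:
  assumes closed: "\<And>u w. K u \<Longrightarrow> K (u @ w) \<Longrightarrow> K w"
  shows "finite Z \<Longrightarrow> [] \<notin> Z \<Longrightarrow> Z \<subseteq> Collect K \<Longrightarrow>
    \<exists>Z'. finite Z' \<and> [] \<notin> Z' \<and> Z' \<subseteq> Collect K \<and> code Z' \<and> Z \<subseteq> concat ` lists Z'"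
proof (induction "sum length Z" arbitrary: Z rule: less_induct)
  case less
  show ?case
  proof (cases "code Z")
    case True
    have "Z \<subseteq> concat ` lists Z"
    proof
      fix z assume "z \<in> Z"
      then have "[z] \<in> lists Z" by simp
      then show "z \<in> concat ` lists Z" by (metis concat.simps image_eqI append_Nil2)
    qed
    with True less.prems show ?thesis by blast
  next
    case False
    then obtain xs ys where "xs \<in> lists Z" "ys \<in> lists Z" "concat xs = concat ys" "xs \<noteq> ys"
      unfolding code_def inj_on_def by blast
    with less.prems obtain u w where uw: "u \<in> Z" "u @ w \<in> Z" "w \<noteq> []"
      using distinct_factorizations_prefix[of xs ys] by blast
    define Z1 where "Z1 = insert w (Z - {u @ w})"
    have shorter: "sum length Z1 < sum length Z"
      unfolding Z1_def using less.prems uw by (intro total_length_decreases) auto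
    have "finite Z1" "[] \<notin> Z1" "Z1 \<subseteq> Collect K"
      using less.prems uw closed[of u w] by (auto simp: Z1_def)
    then obtain Z' where Z': "finite Z'" "[] \<notin> Z'" "Z' \<subseteq> Collect K" "code Z'"
      and gen: "Z1 \<subseteq> concat ` lists Z'"
      using less.hyps[OF shorter] by blast
    have "u @ w \<in> concat ` lists Z'"
    proof -
      have "u \<in> Z1" "w \<in> Z1" using uw by (auto simp: Z1_def)
      then obtain xs1 xs2 where "xs1 \<in> lists Z'" "u = concat xs1" "xs2 \<in> lists Z'" "w = concat xs2"
        using gen by blast
      then show ?thesis by (metis concat_append append_in_lists_conv image_eqI)
    qed
    moreover have "Z - {u @ w} \<subseteq> concat ` lists Z'" using gen by (simp add: Z1_def)
    ultimately have "Z \<subseteq> concat ` lists Z'" by blast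
    with Z' show ?thesis by blast
  qed
qed

text \<open>A solution whose images lie in the monoid generated by a finite code Z factors
  as theta o h' through a solution h' over the natural numbers: the letters of h' number
  the code words, and theta decodes them.  Unique factorization over Z is what makes h'
  a solution again.\<close>

lemma solution_factors_through_code:
  fixes g :: "'x \<Rightarrow> 'a list"
  assumes finZ: "finite Z" and code: "code Z" and sol: "is_solution T g"
    and gen: "g ` alpT T \<subseteq> concat ` lists Z"
  obtains h' :: "'x \<Rightarrow> nat list" and \<theta> :: "nat \<Rightarrow> 'a list"
  where "is_solution T h'" "\<forall>x\<in>alpT T. g x = morph \<theta> (h' x)" "\<theta> ` alph T h' \<subseteq> Z"
proof -
  obtain e :: "'a list \<Rightarrow> nat" where e: "inj_on e Z"
    using finite_imp_inj_to_nat_seg[OF finZ] by blast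
  define \<theta> where "\<theta> = inv_into Z e"
  have \<theta>e: "\<theta> (e z) = z" if z_Z: "z \<in> Z" for z
    unfolding \<theta>_def using e z_Z by simp
  have "\<forall>x\<in>alpT T. \<exists>xs. xs \<in> lists Z \<and> concat xs = g x"
  proof
    fix x assume "x \<in> alpT T"
    then have "g x \<in> concat ` lists Z" by (intro subsetD[OF gen] imageI)
    then show "\<exists>xs. xs \<in> lists Z \<and> concat xs = g x" by (metis imageE)
  qed
  from bchoice[OF this] obtain fac
    where fac: "\<And>x. x \<in> alpT T \<Longrightarrow> fac x \<in> lists Z \<and> concat (fac x) = g x" by blast
  define h' where "h' = (\<lambda>x. map e (fac x))"
  have decode: "morph \<theta> (map e xs) = concat xs" if xs_Z: "xs \<in> lists Z" for xs
  proof -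
    have "map (\<theta> \<circ> e) xs = xs" using xs_Z \<theta>e by (intro map_idI) auto
    then show ?thesis by (simp add: morph_def)
  qed
  have h'_factors: "morph h' u = map e (concat (map fac u))" for u
    by (simp add: morph_def h'_def map_concat o_def)
  have fac_lists: "concat (map fac u) \<in> lists Z" if u_alp: "set u \<subseteq> alpT T" for u
    using u_alp fac by (induction u) simp_all
  have fac_concat: "concat (concat (map fac u)) = morph g u" if u_alp: "set u \<subseteq> alpT T" for u
    using u_alp fac by (induction u) (simp_all add: morph_def)
  have "is_solution T h'"
    unfolding is_solution_def
  proof clarify
    fix u v assume uv: "(u, v) \<in> T"
    then have uv_alp: "set u \<subseteq> alpT T" "set v \<subseteq> alpT T" by (auto simp: alpT_def)
    have "morph g u = morph g v" using sol uv by (auto simp: is_solution_def)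
    then have "concat (map fac u) = concat (map fac v)"
      using uv_alp fac_lists fac_concat inj_onD[OF code[unfolded code_def]] by metis
    then show "morph h' u = morph h' v" by (simp add: h'_factors)
  qed
  moreover have "\<forall>x\<in>alpT T. g x = morph \<theta> (h' x)"
    using fac decode by (simp add: h'_def)
  moreover have "\<theta> ` alph T h' \<subseteq> Z"
  proof (rule image_subsetI)
    fix i assume "i \<in> alph T h'"
    then obtain x z where "x \<in> alpT T" "z \<in> set (fac x)" "i = e z"
      by (auto simp: alph_def h'_def)
    then show "\<theta> i \<in> Z" using fac \<theta>e by (metis in_listsD)
  qed
  ultimately show thesis by (rule that)
qed

section \<open>Principal solutions have independent letters\<close>

lemma images_in_weightless_code:
  fixes g :: "'x \<Rightarrow> 'a list" and c :: "'a \<Rightarrow> rat"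
  assumes finT: "finite (alpT T)" and zero: "\<forall>x\<in>alpT T. sum_list (map c (g x)) = 0"
  obtains Z where "finite Z" "[] \<notin> Z" "Z \<subseteq> {z. sum_list (map c z) = 0}" "code Z"
    "g ` alpT T \<subseteq> concat ` lists Z"
proof -
  have closed: "sum_list (map c w) = 0"
    if "sum_list (map c u) = 0" "sum_list (map c (u @ w)) = 0" for u w :: "'a list"
    using that by simp
  have images: "finite (g ` alpT T - {[]})" "[] \<notin> g ` alpT T - {[]}"
    "g ` alpT T - {[]} \<subseteq> {z. sum_list (map c z) = 0}"
    using finT zero by auto
  have "\<exists>Z. finite Z \<and> [] \<notin> Z \<and> Z \<subseteq> {z. sum_list (map c z) = 0} \<and> code Z \<and>
            g ` alpT T - {[]} \<subseteq> concat ` lists Z"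
    by (rule code_refinement[OF closed images])
  then obtain Z where Z: "finite Z" "[] \<notin> Z" "Z \<subseteq> {z. sum_list (map c z) = 0}" "code Z"
    and gen: "g ` alpT T - {[]} \<subseteq> concat ` lists Z" by blast
  text \<open>The empty image is generated by the empty factorization.\<close>
  have "[] \<in> concat ` lists Z" by (metis concat.simps(1) image_eqI lists.Nil)
  then have "{[]} \<union> concat ` lists Z = concat ` lists Z"
    by (simp only: insert_is_Un[symmetric] insert_absorb)
  then have "g ` alpT T \<subseteq> concat ` lists Z"
    using gen by (simp only: Diff_subset_conv)
  with Z show thesis by (rule that)
qed

text \<open>Factor the solution
  through a weightless code; principality makes the code words single letters.\<close>

lemma principal_weight_vanishes:
  fixes g :: "'x \<Rightarrow> 'a list" and c :: "'a \<Rightarrow> rat"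
  assumes finT: "finite (alpT T)" and pr: "principal T g"
    and zero: "\<forall>x\<in>alpT T. sum_list (map c (g x)) = 0"
    and a: "a \<in> alph T g"
  shows "c a = 0"
proof -
  obtain Z where Z: "finite Z" "[] \<notin> Z" "Z \<subseteq> {z. sum_list (map c z) = 0}" "code Z"
    and gen: "g ` alpT T \<subseteq> concat ` lists Z"
    by (rule images_in_weightless_code[OF finT zero])
  have sol: "is_solution T g" using pr unfolding principal_def by (rule conjunct1)
  obtain h' :: "'x \<Rightarrow> nat list" and \<theta>
    where h': "is_solution T h'" "\<forall>x\<in>alpT T. g x = morph \<theta> (h' x)" "\<theta> ` alph T h' \<subseteq> Z"
    by (rule solution_factors_through_code[OF Z(1,4) sol gen])
  have "nonerasing_on (alph T h') \<theta>"
    using h'(3) Z(2) by (auto simp: nonerasing_on_def)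
  then have "renaming_on (alph T h') \<theta>"
    using pr h'(1,2) unfolding principal_def by blast
  then obtain f where f: "\<And>i. i \<in> alph T h' \<Longrightarrow> \<theta> i = [f i]"
    by (auto simp: renaming_on_def)
  from a obtain x where x: "x \<in> alpT T" "a \<in> set (morph \<theta> (h' x))"
    using h'(2) by (auto simp: alph_def)
  then obtain i where i: "i \<in> set (h' x)" "a \<in> set (\<theta> i)" by (auto simp: morph_def)
  then have "i \<in> alph T h'" using x by (auto simp: alph_def)
  with f i(2) have "\<theta> i = [a]" by fastforce
  moreover have "\<theta> i \<in> Z" using \<open>i \<in> alph T h'\<close> h'(3) by blast
  ultimately show ?thesis using Z(3) by auto
qed

lemma weighted_count_eq_sum_list:
  fixes c :: "'a \<Rightarrow> rat"
  assumes "finite A" "set w \<subseteq> A"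
  shows "(\<Sum>a\<in>A. c a * of_nat (count_list w a)) = sum_list (map c w)"
  using assms(2)
proof (induction w)
  case (Cons b w)
  have "(\<Sum>a\<in>A. c a * of_nat (count_list (b # w) a))
      = (\<Sum>a\<in>A. (if a = b then c a else 0) + c a * of_nat (count_list w a))"
    by (rule sum.cong) (auto simp: algebra_simps)
  also have "\<dots> = c b + (\<Sum>a\<in>A. c a * of_nat (count_list w a))"
    using Cons.prems assms(1) by (simp add: sum.distrib)
  finally show ?case using Cons by simp
qed simp

lemma principal_gamma_independent:
  assumes finT: "finite (alpT T)" and pr: "principal T g"
  shows "inj_on (gamma T g) (alph T g) \<and> Q.independent (gamma T g ` alph T g)"
proof (rule independent_family_if_only_trivial_relation[OF finite_alph[OF finT]])
  fix c assume rel: "(\<Sum>a\<in>alph T g. qscale (c a) (gamma T g a)) = 0"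
  have "sum_list (map c (g x)) = 0" if x: "x \<in> alpT T" for x
  proof -
    have "set (g x) \<subseteq> alph T g" using x by (auto simp: alph_def)
    moreover have "(\<Sum>a\<in>alph T g. c a * of_nat (count_list (g x) a)) = 0"
      using fun_cong[OF rel, of x] x by (simp add: sum_fun_apply qscale_def gamma_def)
    ultimately show ?thesis
      using weighted_count_eq_sum_list[OF finite_alph[OF finT]] by metis
  qed
  then show "\<forall>a\<in>alph T g. c a = 0"
    using principal_weight_vanishes[OF finT pr] by blast
qed

lemma rank_principal:
  assumes finT: "finite (alpT T)" and pr: "principal T g"
  shows "rank T g = card (alph T g)"
proof -
  note indep = principal_gamma_independent[OF assms]
  have "range (gamma T g) \<subseteq> Q.span (gamma T g ` alph T g)"
    using gamma_morph_comp_in_span[OF finT, of g "\<lambda>a. [a]" g] by simp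
  then have "card (gamma T g ` alph T g) = rank T g"
    unfolding rank_def using indep by (intro Q.basis_card_eq_dim) auto
  with indep show ?thesis by (simp add: card_image)
qed

theorem lemma2p2:
  fixes T :: "'x word_system" and g :: "'x \<Rightarrow> 'a list"
  assumes "finite (alpT T)"
    and "principal T g"
  shows "rank T g = card (alph T g) \<and>
         (\<forall>(\<theta> :: 'a \<Rightarrow> 'b list) (h :: 'x \<Rightarrow> 'b list).
            (\<forall>x\<in>alpT T. h x = morph \<theta> (g x)) \<longrightarrow> rank T h \<le> rank T g)"
proof (intro conjI allI impI)
  show "rank T g = card (alph T g)" by (rule rank_principal[OF assms])
  fix \<theta> :: "'a \<Rightarrow> 'b list" and h :: "'x \<Rightarrow> 'b list"
  assume "\<forall>x\<in>alpT T. h x = morph \<theta> (g x)"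
  then show "rank T h \<le> rank T g"
    using rank_morph_comp_le[OF assms(1)] rank_principal[OF assms] by simp
qed

end
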